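(* If $\lambda$ is a strict partition ($\lambda_1>\lambda_2>\cdots>\lambda_n\ge0$), then the number of gapless $\lambda$-keys is the Catalan number $C_n=\frac{1}{n+1}\binom{2n}{n}$.
   Context: Fix $n\ge1$, $[m]=\{1,\dots,m\}$. A partition is $\lambda=(\lambda_1\ge\cdots\ge\lambda_n\ge0)\in\mathbb{Z}^n$; its boxes are $(j,i)$ (column $j$, row $i$) with $1\le j\le\lambda_1$, $1\le i\le\zeta_j:=\#\{i:\lambda_i\ge j\}$. A tableau of shape $\lambda$ fills the boxes with values in $[n]$, strictly increasing down columns and weakly increasing along rows. A $\lambda$-key is a tableau $Y$ of shape $\lambda$ such that the set of entries of column $l$ contains the set of entries of column $j$ whenever $l\le j$. Let $q_1<\dots<q_r$ be the distinct column lengths of $\lambda$ less than $n$. A $\lambda$-key $Y$ is gapless if for every $h\in[r-1]$: letting $b$ be the smallest value in the columns of length $q_{h+1}$ that does not appear in the columns of length $q_h$, and $m$ the largest value in the columns of length $q_h$, if $b\le m$ then every column of length $q_{h+1}$ contains all of $b,b+1,\dots,m$. *)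

theory Defs
  imports Complex_Main
begin

text \<open>A partition of length n is represented by lam :: nat => nat, using only
  the values lam 1, ..., lam n. A tableau is a function T :: nat => nat => nat,
  T j i being the entry in column j, row i; entries outside the diagram are 0.\<close>

definition is_partition :: "nat \<Rightarrow> (nat \<Rightarrow> nat) \<Rightarrow> bool" where
  "is_partition n lam \<longleftrightarrow> (\<forall>i. 1 \<le> i \<and> i < n \<longrightarrow> lam (Suc i) \<le> lam i)"

definition strict_partition :: "nat \<Rightarrow> (nat \<Rightarrow> nat) \<Rightarrow> bool" where
  "strict_partition n lam \<longleftrightarrow> (\<forall>i. 1 \<le> i \<and> i < n \<longrightarrow> lam (Suc i) < lam i)"

definition col_len :: "nat \<Rightarrow> (nat \<Rightarrow> nat) \<Rightarrow> nat \<Rightarrow> nat" where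
  "col_len n lam j = card {i. 1 \<le> i \<and> i \<le> n \<and> j \<le> lam i}"

definition boxes :: "nat \<Rightarrow> (nat \<Rightarrow> nat) \<Rightarrow> (nat \<times> nat) set" where
  "boxes n lam = {(j, i). 1 \<le> j \<and> j \<le> lam 1 \<and> 1 \<le> i \<and> i \<le> col_len n lam j}"

definition tableau :: "nat \<Rightarrow> (nat \<Rightarrow> nat) \<Rightarrow> (nat \<Rightarrow> nat \<Rightarrow> nat) \<Rightarrow> bool" where
  "tableau n lam T \<longleftrightarrow>
     (\<forall>j i. (j, i) \<in> boxes n lam \<longrightarrow> 1 \<le> T j i \<and> T j i \<le> n) \<and>
     (\<forall>j i. (j, i) \<notin> boxes n lam \<longrightarrow> T j i = 0) \<and>
     (\<forall>j i. (j, i) \<in> boxes n lam \<and> (j, Suc i) \<in> boxes n lam \<longrightarrow> T j i < T j (Suc i)) \<and>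
     (\<forall>j i. (j, i) \<in> boxes n lam \<and> (Suc j, i) \<in> boxes n lam \<longrightarrow> T j i \<le> T (Suc j) i)"

definition col_set :: "nat \<Rightarrow> (nat \<Rightarrow> nat) \<Rightarrow> (nat \<Rightarrow> nat \<Rightarrow> nat) \<Rightarrow> nat \<Rightarrow> nat set" where
  "col_set n lam T j = {T j i | i. 1 \<le> i \<and> i \<le> col_len n lam j}"

definition is_key :: "nat \<Rightarrow> (nat \<Rightarrow> nat) \<Rightarrow> (nat \<Rightarrow> nat \<Rightarrow> nat) \<Rightarrow> bool" where
  "is_key n lam Y \<longleftrightarrow> tableau n lam Y \<and>
     (\<forall>l j. 1 \<le> l \<and> l \<le> j \<and> j \<le> lam 1 \<longrightarrow> col_set n lam Y j \<subseteq> col_set n lam Y l)"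

definition cols_of_len :: "nat \<Rightarrow> (nat \<Rightarrow> nat) \<Rightarrow> nat \<Rightarrow> nat set" where
  "cols_of_len n lam q = {j. 1 \<le> j \<and> j \<le> lam 1 \<and> col_len n lam j = q}"

definition short_lengths :: "nat \<Rightarrow> (nat \<Rightarrow> nat) \<Rightarrow> nat set" where
  "short_lengths n lam = {col_len n lam j | j. 1 \<le> j \<and> j \<le> lam 1 \<and> col_len n lam j < n}"

definition vals_of_len :: "nat \<Rightarrow> (nat \<Rightarrow> nat) \<Rightarrow> (nat \<Rightarrow> nat \<Rightarrow> nat) \<Rightarrow> nat \<Rightarrow> nat set" where
  "vals_of_len n lam Y q = (\<Union>j\<in>cols_of_len n lam q. col_set n lam Y j)"

definition gapless :: "nat \<Rightarrow> (nat \<Rightarrow> nat) \<Rightarrow> (nat \<Rightarrow> nat \<Rightarrow> nat) \<Rightarrow> bool" where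
  "gapless n lam Y \<longleftrightarrow>
     (\<forall>q \<in> short_lengths n lam. \<forall>q' \<in> short_lengths n lam.
        q < q' \<and> \<not> (\<exists>x \<in> short_lengths n lam. q < x \<and> x < q') \<longrightarrow>
        (let b = Min (vals_of_len n lam Y q' - vals_of_len n lam Y q);
             m = Max (vals_of_len n lam Y q)
         in b \<le> m \<longrightarrow> (\<forall>j \<in> cols_of_len n lam q'. {b..m} \<subseteq> col_set n lam Y j)))"

end

(*
  For a strict partition every column length 1, ..., n occurs, column Suc (lam (Suc q)) having
  length q.  The columns of a key are nested, so a key is the same thing as a permutation
  x_1, ..., x_n of [n]: the columns of length q hold {x_1, ..., x_q}.  Under this bijection
  gaplessness says that each x_(k+1) either exceeds x_1, ..., x_k or is the largest number
  below their maximum that has not yet occurred.  Counting such sequences by the number a of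
  values above the current maximum and the number g of values missing below it gives the
  ballot numbers C(2a+g, a) - C(2a+g, a-1); for a = n, g = 0 this is the Catalan number.
*)
theory Submission
  imports Defs
begin

lemma sorted_list_of_set_nth_le_of_subset:
  fixes A B :: "nat set"
  assumes "finite B" "A \<subseteq> B" "k < card A"
  shows "sorted_list_of_set B ! k \<le> sorted_list_of_set A ! k"
proof (rule ccontr)
  define xs ys where "xs = sorted_list_of_set A" and "ys = sorted_list_of_set B"
  assume "\<not> ?thesis"
  then have less: "xs ! k < ys ! k"
    by (simp add: xs_def ys_def)
  have "finite A"
    using assms finite_subset by blast
  have "set (take (Suc k) xs) \<subseteq> set (take k ys)"
  proof
    fix y assume "y \<in> set (take (Suc k) xs)"
    then obtain p where p: "p \<le> k" "y = xs ! p"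
      by (auto simp: in_set_conv_nth less_Suc_eq_le)
    then have "y \<le> xs ! k"
      using assms(3) \<open>finite A\<close> by (simp add: xs_def sorted_nth_mono)
    have "y \<in> set ys"
      using nth_mem[of p xs] p assms \<open>finite A\<close> by (auto simp: xs_def ys_def)
    then obtain r where r: "r < length ys" "y = ys ! r"
      by (auto simp: in_set_conv_nth)
    with \<open>y \<le> xs ! k\<close> have "r < k"
      using less sorted_nth_mono[of ys k r] assms(1) by (fastforce simp: ys_def)
    then show "y \<in> set (take k ys)"
      using r by (auto simp: in_set_conv_nth)
  qed
  then have "card (set (take (Suc k) xs)) \<le> card (set (take k ys))"
    by (simp add: card_mono)
  also have "\<dots> \<le> k"
    using card_length[of "take k ys"] by simp
  finally show False
    using assms(3) \<open>finite A\<close> by (simp add: xs_def distinct_card)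
qed

lemma list_eq_if_set_take_eq:
  assumes "distinct xs" "distinct ys" "length xs = length ys"
    and "\<And>q. set (take q xs) = set (take q ys)"
  shows "xs = ys"
proof (rule nth_equalityI)
  fix k assume "k < length xs"
  then have "xs ! k \<in> set (take (Suc k) xs) - set (take k xs)"
    "ys ! k \<in> set (take (Suc k) ys) - set (take k ys)"
    "set (take (Suc k) ys) = insert (ys ! k) (set (take k ys))"
    using assms(1-3) distinct_take[of xs "Suc k"] distinct_take[of ys "Suc k"]
    by (auto simp: take_Suc_conv_app_nth)
  then show "xs ! k = ys ! k"
    using assms(4) by blast
qed fact

lemma exists_list_set_take_eq:
  assumes "\<And>q. q < N \<Longrightarrow> S q \<subseteq> S (Suc q)"
    and "\<And>q. q \<le> N \<Longrightarrow> finite (S q) \<and> card (S q) = q"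
  shows "\<exists>xs. length xs = N \<and> distinct xs \<and> (\<forall>q \<le> N. set (take q xs) = S q)"
  using assms
proof (induction N)
  case 0
  then show ?case by auto
next
  case (Suc N)
  then obtain xs where xs: "length xs = N" "distinct xs" "\<forall>q \<le> N. set (take q xs) = S q"
    by auto
  have "card (S (Suc N) - S N) = 1"
    using Suc.prems by (simp add: card_Diff_subset)
  then obtain x where x: "S (Suc N) - S N = {x}"
    using card_1_singletonE by blast
  have "set xs = S N"
    using xs by (metis order_refl take_all)
  then have "length (xs @ [x]) = Suc N \<and> distinct (xs @ [x]) \<and> (\<forall>q \<le> Suc N. set (take q (xs @ [x])) = S q)"
    using xs x Suc.prems(1)[of N] by (auto simp: le_Suc_eq)
  then show ?case ..
qed

lemma set_eq_nth_pred_image: "set xs = {xs ! (i - 1) | i. 1 \<le> i \<and> i \<le> length xs}"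
proof (intro equalityI subsetI)
  fix x assume "x \<in> set xs"
  then obtain k where "k < length xs" "x = xs ! k"
    by (auto simp: in_set_conv_nth)
  then show "x \<in> {xs ! (i - 1) | i. 1 \<le> i \<and> i \<le> length xs}"
    by (intro CollectI exI[of _ "Suc k"]) simp
qed auto

lemma length_eq_if_set_eq_atLeastAtMost: "distinct xs \<Longrightarrow> set xs = {1..n} \<Longrightarrow> length xs = n"
  by (metis card_atLeastAtMost diff_Suc_1 distinct_card)

lemma set_take_Suc_nth:
  assumes "distinct xs" "k < length xs"
  shows "set (take (Suc k) xs) = insert (xs ! k) (set (take k xs))" "xs ! k \<notin> set (take k xs)"
  using assms distinct_take[OF assms(1), of "Suc k"] by (simp_all add: take_Suc_conv_app_nth)

section \<open>Ballot numbers\<close>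

fun ballot :: "nat \<Rightarrow> nat \<Rightarrow> nat" where
  "ballot 0 g = 1"
| "ballot (Suc a) 0 = ballot a 1"
| "ballot (Suc a) (Suc g) = ballot (Suc a) g + ballot a (Suc (Suc g))"

lemma ballot_Suc_right_eq_sum:
  "ballot a (Suc g) = (\<Sum>t=1..Suc a. ballot (Suc a - t) (g + t - 1))"
proof (induction a arbitrary: g)
  case 0
  show ?case by simp
next
  case (Suc a)
  have "(\<Sum>t=1..Suc (Suc a). ballot (Suc (Suc a) - t) (g + t - 1))
      = ballot (Suc a) g + (\<Sum>t=Suc 1..Suc (Suc a). ballot (Suc (Suc a) - t) (g + t - 1))"
    by (subst sum.atLeast_Suc_atMost) auto
  also have "(\<Sum>t=Suc 1..Suc (Suc a). ballot (Suc (Suc a) - t) (g + t - 1))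
      = (\<Sum>t=1..Suc a. ballot (Suc a - t) (Suc g + t - 1))"
    by (rule sum.reindex_bij_witness[of _ "\<lambda>t. t + 1" "\<lambda>t. t - 1"]) auto
  also have "\<dots> = ballot a (Suc (Suc g))"
    by (rule Suc.IH[symmetric])
  finally show ?case
    by simp
qed

lemma ballot_eq_sum:
  assumes "0 < a \<or> 0 < g"
  shows "ballot a g = (if 0 < g then ballot a (g - 1) else 0) + (\<Sum>t=1..a. ballot (a - t) (g + t - 1))"
proof (cases a)
  case 0
  then show ?thesis using assms by auto
next
  case (Suc b)
  then show ?thesis
    using ballot_Suc_right_eq_sum[of b g] by (cases g) simp_all
qed

lemma ballot_eq_sum_greaterThan:
  assumes "c \<le> m" "m \<le> n" "c < n"
  shows "ballot (n - m) (m - c)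
           = (\<Sum>x \<in> {m<..n}. ballot (n - x) (x - Suc c)) + (if c < m then ballot (n - m) (m - Suc c) else 0)"
proof -
  have "ballot (n - m) (m - c)
      = (if 0 < m - c then ballot (n - m) (m - c - 1) else 0) + (\<Sum>t = 1..n - m. ballot (n - m - t) (m - c + t - 1))"
    using ballot_eq_sum[of "n - m" "m - c"] assms by auto
  also have "(\<Sum>t = 1..n - m. ballot (n - m - t) (m - c + t - 1)) = (\<Sum>x \<in> {m<..n}. ballot (n - x) (x - Suc c))"
    by (rule sum.reindex_bij_witness[of _ "\<lambda>x. x - m" "\<lambda>t. t + m"])
      (use assms in \<open>auto simp: add.commute\<close>)
  finally show ?thesis
    by (simp add: add.commute)
qed

lemma ballot_add_binomial:
  "0 < a \<Longrightarrow> ballot a g + ((2 * a + g) choose (a - 1)) = (2 * a + g) choose a"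
proof (induction a g rule: ballot.induct)
  case (1 g)
  then show ?case by simp
next
  case (2 a)
  show ?case
  proof (cases a)
    case (Suc b)
    have "(2 * Suc a) choose a = ((2 * a + 1) choose b) + ((2 * a + 1) choose a)"
      by (simp add: Suc)
    moreover have "(2 * a + 1) choose Suc a = (2 * a + 1) choose a"
      using binomial_symmetric[of "Suc a" "2 * a + 1"] by simp
    ultimately show ?thesis
      using 2 Suc by simp
  qed simp
next
  case (3 a g)
  have IH: "ballot (Suc a) g + ((2 * a + g + 2) choose a) = (2 * a + g + 2) choose Suc a"
    using "3.IH"(1) by simp
  show ?case
  proof (cases a)
    case 0
    then show ?thesis using IH by (simp add: numeral_eq_Suc)
  next
    case (Suc b)
    have "ballot a (Suc (Suc g)) + ((2 * a + g + 2) choose b) = (2 * a + g + 2) choose a"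
      using "3.IH"(2) Suc by simp
    then show ?thesis
      using IH Suc by (simp add: numeral_eq_Suc)
  qed
qed

lemma Suc_times_ballot_eq_binomial: "Suc n * ballot n 0 = (2 * n) choose n"
proof (cases n)
  case (Suc k)
  define B where "B = (2 * n) choose n"
  define A where "A = (2 * n) choose k"
  have "ballot n 0 + A = B"
    using ballot_add_binomial[of n 0] Suc by (simp add: A_def B_def)
  moreover have "n * B = Suc n * A"
  proof -
    have "Suc (k + Suc k) = 2 * n"
      using Suc by simp
    then show ?thesis
      using Suc_times_binomial_add[of k "Suc k"] Suc by (simp only: A_def B_def)
  qed
  ultimately have "Suc n * ballot n 0 + n * B = Suc n * B"
    by (metis add_mult_distrib2)
  then show ?thesis
    by (simp add: B_def)
qed simp

section \<open>Admissible insertion sequences\<close>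

definition admissible :: "nat set \<Rightarrow> nat \<Rightarrow> bool" where
  "admissible P x \<longleftrightarrow> (P \<noteq> {} \<longrightarrow> x \<le> Max P \<longrightarrow> {x..Max P} \<subseteq> insert x P)"

fun admissible_seq :: "nat set \<Rightarrow> nat list \<Rightarrow> bool" where
  "admissible_seq P [] = True"
| "admissible_seq P (x # xs) \<longleftrightarrow> admissible P x \<and> admissible_seq (insert x P) xs"

definition completions :: "nat \<Rightarrow> nat set \<Rightarrow> nat list set" where
  "completions n P = {xs. distinct xs \<and> set xs = {1..n} - P \<and> admissible_seq P xs}"

lemma admissible_seq_iff_nth:
  "admissible_seq P xs \<longleftrightarrow> (\<forall>k < length xs. admissible (P \<union> set (take k xs)) (xs ! k))"
proof (induction xs arbitrary: P)
  case (Cons x xs)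
  have "(\<forall>k < length (x # xs). admissible (P \<union> set (take k (x # xs))) ((x # xs) ! k)) \<longleftrightarrow>
        admissible P x \<and> (\<forall>k < length xs. admissible (insert x P \<union> set (take k xs)) (xs ! k))"
    by (auto simp: less_Suc_eq_0_disj)
  then show ?case
    using Cons.IH by simp
qed simp

lemma admissible_empty: "admissible {} x"
  by (simp add: admissible_def)

lemma admissible_above_Max: "Max P < x \<Longrightarrow> admissible P x"
  by (simp add: admissible_def)

lemma admissible_if_insert_eq_atLeastAtMost:
  assumes "insert x P = {1..N}"
  shows "admissible P x"
proof -
  have "finite P"
    using finite_subset[of P "{1..N}"] assms by auto
  then have "Max P \<le> N" if "P \<noteq> {}"
    using assms that Max_in by fastforce
  then show ?thesis
    using assms by (auto simp: admissible_def)
qed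

lemma admissible_seq_empty_iff:
  assumes "distinct xs" "set xs = {1..n}"
  shows "admissible_seq {} xs \<longleftrightarrow> (\<forall>k. 1 \<le> k \<and> Suc k < n \<longrightarrow> admissible (set (take k xs)) (xs ! k))"
proof -
  have "length xs = n"
    using length_eq_if_set_eq_atLeastAtMost[OF assms] .
  have last: "admissible (set (take k xs)) (xs ! k)" if "Suc k = n" for k
    using set_take_Suc_nth[OF assms(1), of k] that \<open>length xs = n\<close> assms(2)
    by (intro admissible_if_insert_eq_atLeastAtMost[where N = n]) simp
  have "(\<forall>k < n. admissible (set (take k xs)) (xs ! k))
      \<longleftrightarrow> (\<forall>k. 1 \<le> k \<and> Suc k < n \<longrightarrow> admissible (set (take k xs)) (xs ! k))"
  proof (intro iffI allI impI)
    fix k assume inner: "\<forall>k. 1 \<le> k \<and> Suc k < n \<longrightarrow> admissible (set (take k xs)) (xs ! k)" and "k < n"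
    then consider "k = 0" | "1 \<le> k \<and> Suc k < n" | "Suc k = n"
      by linarith
    then show "admissible (set (take k xs)) (xs ! k)"
      by cases (simp_all add: admissible_empty inner last)
  qed simp
  then show ?thesis
    by (simp add: admissible_seq_iff_nth \<open>length xs = n\<close>)
qed

lemma admissible_gap_iff:
  assumes "finite P" "P \<noteq> {}" and x: "x \<in> {1..Max P} - P"
  shows "admissible P x \<longleftrightarrow> x = Max ({1..Max P} - P)"
proof
  assume "admissible P x"
  then have sub: "{x..Max P} \<subseteq> insert x P"
    using assms by (simp add: admissible_def)
  have "y \<le> x" if "y \<in> {1..Max P} - P" for y
  proof (rule ccontr)
    assume "\<not> y \<le> x"
    then have "y \<in> {x..Max P}" "y \<noteq> x"
      using that by auto
    then show False
      using that sub by blast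
  qed
  then show "x = Max ({1..Max P} - P)"
    using x by (intro Max_eqI[symmetric]) auto
next
  assume "x = Max ({1..Max P} - P)"
  then have le_x: "\<And>y. y \<in> {1..Max P} - P \<Longrightarrow> y \<le> x"
    by simp
  have "{x..Max P} \<subseteq> insert x P"
  proof
    fix y assume y: "y \<in> {x..Max P}"
    show "y \<in> insert x P"
    proof (rule ccontr)
      assume "y \<notin> insert x P"
      then show False
        using le_x[of y] x y by auto
    qed
  qed
  then show "admissible P x"
    by (simp add: admissible_def)
qed

lemma admissible_choices:
  assumes "P \<subseteq> {1..n}" "P \<noteq> {}"
  shows "{x \<in> {1..n} - P. admissible P x}
           = {Max P<..n} \<union> {x \<in> {1..Max P} - P. x = Max ({1..Max P} - P)}"
    (is "?A = ?B")
proof -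
  have "finite P"
    using assms(1) finite_subset by blast
  have "x \<in> ?A \<longleftrightarrow> x \<in> ?B" for x
  proof (cases "Max P < x")
    case True
    then have "x \<notin> P"
      using Max_ge[OF \<open>finite P\<close>] by fastforce
    then show ?thesis
      using True admissible_above_Max by auto
  next
    case False
    have "Max P \<le> n"
      using assms \<open>finite P\<close> by auto
    then show ?thesis
      using False admissible_gap_iff[OF \<open>finite P\<close> assms(2), of x] by auto
  qed
  then show ?thesis
    by blast
qed

lemma card_gaps_below_Max:
  assumes "P \<subseteq> {1..n}" "P \<noteq> {}"
  shows "card ({1..Max P} - P) = Max P - card P"
proof -
  have "finite P"
    using assms(1) finite_subset by blast
  then have "P \<subseteq> {1..Max P}"
    using assms(1) by auto
  then show ?thesis
    by (simp add: card_Diff_subset \<open>finite P\<close>)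
qed

lemma finite_completions: "finite (completions n P)"
proof -
  have "completions n P \<subseteq> {xs. set xs \<subseteq> {1..n} \<and> length xs \<le> n}"
  proof
    fix xs assume "xs \<in> completions n P"
    then have "distinct xs" "set xs \<subseteq> {1..n}"
      by (auto simp: completions_def)
    moreover have "card (set xs) \<le> n"
      using card_mono[OF _ \<open>set xs \<subseteq> {1..n}\<close>] by simp
    ultimately show "xs \<in> {xs. set xs \<subseteq> {1..n} \<and> length xs \<le> n}"
      by (simp add: distinct_card)
  qed
  then show ?thesis
    using finite_lists_length_le[of "{1..n}" n] finite_subset by blast
qed

lemma completions_full: "completions n {1..n} = {[]}"
  by (auto simp: completions_def)

lemma completions_eq_UN:
  assumes "P \<subset> {1..n}"
  shows "completions n P = (\<Union>x \<in> {x \<in> {1..n} - P. admissible P x}. (#) x ` completions n (insert x P))"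
proof (intro equalityI subsetI)
  fix xs assume "xs \<in> completions n P"
  then have xs: "distinct xs" "set xs = {1..n} - P" "admissible_seq P xs"
    by (auto simp: completions_def)
  then obtain y ys where "xs = y # ys"
    using assms by (cases xs) auto
  have "y \<in> {x \<in> {1..n} - P. admissible P x}"
    using xs \<open>xs = y # ys\<close> by auto
  moreover have "xs \<in> (#) y ` completions n (insert y P)"
    using xs \<open>xs = y # ys\<close> by (auto simp: completions_def)
  ultimately show "xs \<in> (\<Union>x \<in> {x \<in> {1..n} - P. admissible P x}. (#) x ` completions n (insert x P))"
    by (rule UN_I)
next
  fix xs assume "xs \<in> (\<Union>x \<in> {x \<in> {1..n} - P. admissible P x}. (#) x ` completions n (insert x P))"
  then obtain x ys where xs: "xs = x # ys" "x \<in> {1..n} - P" "admissible P x"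
    and ys: "distinct ys" "set ys = {1..n} - insert x P" "admissible_seq (insert x P) ys"
    by (auto simp: completions_def)
  have "set xs = {1..n} - P"
    using xs ys(2) by (simp only: set_simps) blast
  then show "xs \<in> completions n P"
    using xs ys by (simp add: completions_def)
qed

lemma card_completions_eq_sum:
  assumes "P \<subset> {1..n}"
  shows "card (completions n P) = (\<Sum>x \<in> {x \<in> {1..n} - P. admissible P x}. card (completions n (insert x P)))"
proof -
  have "card (completions n P) = (\<Sum>x \<in> {x \<in> {1..n} - P. admissible P x}. card ((#) x ` completions n (insert x P)))"
    unfolding completions_eq_UN[OF assms]
    by (rule card_UN_disjoint) (auto simp: finite_completions)
  also have "\<dots> = (\<Sum>x \<in> {x \<in> {1..n} - P. admissible P x}. card (completions n (insert x P)))"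
    by (simp add: card_image)
  finally show ?thesis .
qed

lemma sum_ballot_admissible_choices:
  assumes "P \<subset> {1..n}" "P \<noteq> {}"
  defines "m \<equiv> Max P" and "c \<equiv> card P"
  shows "(\<Sum>x \<in> {x \<in> {1..n} - P. admissible P x}. ballot (n - max x m) (max x m - Suc c))
           = ballot (n - m) (m - c)"
proof -
  define G where "G = {1..m} - P"
  have "P \<subseteq> {1..n}" "finite P" "finite G"
    using assms(1) finite_subset by (auto simp: G_def)
  then have "m \<le> n" "P \<subseteq> {1..m}"
    using assms(2) by (auto simp: m_def)
  then have "c \<le> m"
    using card_mono[of "{1..m}" P] by (simp add: c_def)
  have "c < n"
    using assms(1) psubset_card_mono[of "{1..n}" P] by (simp add: c_def)
  have "card G = m - c"
    using card_gaps_below_Max[OF \<open>P \<subseteq> {1..n}\<close> assms(2)] by (simp add: G_def m_def c_def)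
  then have "G = {} \<longleftrightarrow> \<not> c < m"
    using \<open>c \<le> m\<close> \<open>finite G\<close> by auto
  have "{x \<in> {1..n} - P. admissible P x} = {m<..n} \<union> {x \<in> G. x = Max G}"
    unfolding G_def m_def by (rule admissible_choices[OF \<open>P \<subseteq> {1..n}\<close> assms(2)])
  also have "{x \<in> G. x = Max G} = (if c < m then {Max G} else {})"
    using Max_in[OF \<open>finite G\<close>] \<open>G = {} \<longleftrightarrow> \<not> c < m\<close> by auto
  finally have choices: "{x \<in> {1..n} - P. admissible P x} = {m<..n} \<union> (if c < m then {Max G} else {})" .
  have "Max G \<le> m" if "c < m"
    using that Max_in[OF \<open>finite G\<close>] \<open>G = {} \<longleftrightarrow> \<not> c < m\<close> by (auto simp: G_def)
  then have "(\<Sum>x \<in> {x \<in> {1..n} - P. admissible P x}. ballot (n - max x m) (max x m - Suc c))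
      = (\<Sum>x \<in> {m<..n}. ballot (n - x) (x - Suc c)) + (if c < m then ballot (n - m) (m - Suc c) else 0)"
    unfolding choices by (cases "c < m") (simp_all add: sum.insert max_def)
  also have "\<dots> = ballot (n - m) (m - c)"
    using ballot_eq_sum_greaterThan[OF \<open>c \<le> m\<close> \<open>m \<le> n\<close> \<open>c < n\<close>] by simp
  finally show ?thesis .
qed

lemma card_completions:
  assumes "P \<subseteq> {1..n}" "P \<noteq> {}"
  shows "card (completions n P) = ballot (n - Max P) (Max P - card P)"
  using assms
proof (induction "n - card P" arbitrary: P rule: less_induct)
  case less
  have "finite P"
    using less.prems(1) finite_subset by blast
  show ?case
  proof (cases "P = {1..n}")
    case True
    then have "Max P = n" "card P = n"
      using less.prems(2) by (auto intro: Max_eqI)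
    then show ?thesis
      using True completions_full[of n] by simp
  next
    case False
    then have "P \<subset> {1..n}"
      using less.prems(1) by blast
    then have "card P < n"
      using psubset_card_mono[of "{1..n}" P] by simp
    have "card (completions n (insert x P)) = ballot (n - max x (Max P)) (max x (Max P) - Suc (card P))"
      if "x \<in> {1..n} - P" for x
    proof -
      have "n - card (insert x P) < n - card P"
        using that \<open>finite P\<close> \<open>card P < n\<close> by simp
      then show ?thesis
        using less.hyps[of "insert x P"] that less.prems \<open>finite P\<close> by simp
    qed
    then show ?thesis
      using card_completions_eq_sum[OF \<open>P \<subset> {1..n}\<close>]
        sum_ballot_admissible_choices[OF \<open>P \<subset> {1..n}\<close> less.prems(2)]
      by simp
  qed
qed

lemma card_completions_empty:
  assumes "1 \<le> n"
  shows "card (completions n {}) = ballot n 0"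
proof -
  have "{x \<in> {1..n} - {}. admissible {} x} = {0<..n}"
    by (auto simp: admissible_def)
  moreover have "{} \<subset> {1..n}"
    using assms by auto
  ultimately have "card (completions n {}) = (\<Sum>x \<in> {0<..n}. card (completions n {x}))"
    using card_completions_eq_sum[of "{}" n] by simp
  also have "\<dots> = (\<Sum>x \<in> {0<..n}. ballot (n - x) (x - Suc 0))"
    by (intro sum.cong) (simp_all add: card_completions)
  also have "\<dots> = ballot n 0"
    using ballot_eq_sum_greaterThan[of 0 0 n] assms by simp
  finally show ?thesis .
qed

lemma mem_boxes_iff: "(j, i) \<in> boxes n lam \<longleftrightarrow> 1 \<le> j \<and> j \<le> lam 1 \<and> 1 \<le> i \<and> i \<le> col_len n lam j"
  by (simp add: boxes_def)

lemma col_len_le: "col_len n lam j \<le> n"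
proof -
  have "col_len n lam j \<le> card {1..n}"
    unfolding col_len_def by (rule card_mono) auto
  then show ?thesis
    by simp
qed

lemma col_len_pos:
  assumes "1 \<le> n" "j \<le> lam 1"
  shows "1 \<le> col_len n lam j"
proof -
  have "1 \<in> {i. 1 \<le> i \<and> i \<le> n \<and> j \<le> lam i}"
    using assms by simp
  moreover have "finite {i. 1 \<le> i \<and> i \<le> n \<and> j \<le> lam i}"
    by (rule finite_subset[of _ "{1..n}"]) auto
  ultimately show ?thesis
    unfolding col_len_def by (metis card_gt_0_iff empty_iff less_eq_Suc_le One_nat_def)
qed

lemma col_len_antimono: "j \<le> j' \<Longrightarrow> col_len n lam j' \<le> col_len n lam j"
  unfolding col_len_def by (rule card_mono) auto

lemma finite_col_set: "finite (col_set n lam Y j)"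
  by (simp add: col_set_def)

lemma tableau_col_strict_mono:
  assumes "tableau n lam Y" "1 \<le> j" "j \<le> lam 1" "1 \<le> i" "i < i'" "i' \<le> col_len n lam j"
  shows "Y j i < Y j i'"
proof -
  have "Suc i \<le> i'"
    using assms(5) by simp
  then show ?thesis
    using assms(6)
  proof (induction i' rule: dec_induct)
    case base
    then show ?case
      using assms(1-4) by (simp add: tableau_def mem_boxes_iff)
  next
    case (step m)
    then have "Y j m < Y j (Suc m)"
      using assms(1-4) by (simp add: tableau_def mem_boxes_iff)
    then show ?case
      using step by simp
  qed
qed

lemma sorted_list_of_col_set:
  assumes "tableau n lam Y" "1 \<le> j" "j \<le> lam 1"
  shows "sorted_list_of_set (col_set n lam Y j) = map (\<lambda>i. Y j (Suc i)) [0..<col_len n lam j]"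
proof -
  let ?col = "map (\<lambda>i. Y j (Suc i)) [0..<col_len n lam j]"
  have "sorted_wrt (<) ?col"
    unfolding sorted_wrt_iff_nth_less using tableau_col_strict_mono[OF assms] by auto
  then have "sorted_list_of_set (set ?col) = ?col"
    by (metis sorted_list_of_set_sort_remdups strict_sorted_iff distinct_remdups_id sorted_sort_id)
  moreover have "col_set n lam Y j = set ?col"
    unfolding col_set_def by (force simp: Suc_le_eq gr0_conv_Suc)
  ultimately show ?thesis
    by simp
qed

lemma card_col_set:
  assumes "tableau n lam Y" "1 \<le> j" "j \<le> lam 1"
  shows "card (col_set n lam Y j) = col_len n lam j"
  using arg_cong[OF sorted_list_of_col_set[OF assms], of length] by simp

lemma tableau_eq_nth_col_set:
  assumes "tableau n lam Y" "(j, i) \<in> boxes n lam"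
  shows "Y j i = sorted_list_of_set (col_set n lam Y j) ! (i - 1)"
  using assms sorted_list_of_col_set[OF assms(1)] by (auto simp: mem_boxes_iff)

lemma col_set_subset:
  assumes "tableau n lam Y" "1 \<le> j" "j \<le> lam 1"
  shows "col_set n lam Y j \<subseteq> {1..n}"
  using assms by (fastforce simp: col_set_def tableau_def mem_boxes_iff)

lemma key_col_set_eq_if_col_len_eq:
  assumes "is_key n lam Y" "1 \<le> j" "j \<le> lam 1" "1 \<le> l" "l \<le> lam 1"
    and "col_len n lam j = col_len n lam l"
  shows "col_set n lam Y j = col_set n lam Y l"
proof -
  have "tableau n lam Y"
    using assms(1) by (simp add: is_key_def)
  have "col_set n lam Y j \<subseteq> col_set n lam Y l \<or> col_set n lam Y l \<subseteq> col_set n lam Y j"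
    using assms(1-5) unfolding is_key_def by (cases "j \<le> l") auto
  moreover have "card (col_set n lam Y j) = card (col_set n lam Y l)"
    using card_col_set[OF \<open>tableau n lam Y\<close>] assms by simp
  ultimately show ?thesis
    using card_subset_eq finite_col_set by metis
qed

section \<open>The key of a permutation\<close>

definition key_of :: "nat \<Rightarrow> (nat \<Rightarrow> nat) \<Rightarrow> nat list \<Rightarrow> nat \<Rightarrow> nat \<Rightarrow> nat" where
  "key_of n lam xs j i =
     (if (j, i) \<in> boxes n lam then sorted_list_of_set (set (take (col_len n lam j) xs)) ! (i - 1) else 0)"

lemma card_set_take_col_len:
  assumes "distinct xs" "set xs = {1..n}"
  shows "card (set (take (col_len n lam j) xs)) = col_len n lam j"
  using assms length_eq_if_set_eq_atLeastAtMost[OF assms] col_len_le[of n lam j]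
  by (simp add: distinct_card)

lemma col_set_key_of:
  assumes "distinct xs" "set xs = {1..n}" "1 \<le> j" "j \<le> lam 1"
  shows "col_set n lam (key_of n lam xs) j = set (take (col_len n lam j) xs)"
proof -
  let ?A = "set (take (col_len n lam j) xs)"
  have "col_set n lam (key_of n lam xs) j
      = {sorted_list_of_set ?A ! (i - 1) | i. 1 \<le> i \<and> i \<le> length (sorted_list_of_set ?A)}"
    using assms card_set_take_col_len[OF assms(1,2)] by (auto simp: col_set_def key_of_def mem_boxes_iff)
  also have "\<dots> = set (sorted_list_of_set ?A)"
    by (rule set_eq_nth_pred_image[symmetric])
  finally show ?thesis
    by simp
qed

lemma key_of_tableau:
  assumes "distinct xs" "set xs = {1..n}"
  shows "tableau n lam (key_of n lam xs)"
proof -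
  let ?col = "\<lambda>j. sorted_list_of_set (set (take (col_len n lam j) xs))"
  have len: "length (?col j) = col_len n lam j" for j
    using card_set_take_col_len[OF assms] by simp
  have entry: "key_of n lam xs j i = ?col j ! (i - 1)" if "(j, i) \<in> boxes n lam" for j i
    using that by (simp add: key_of_def)
  have "1 \<le> key_of n lam xs j i \<and> key_of n lam xs j i \<le> n" if "(j, i) \<in> boxes n lam" for j i
  proof -
    have "?col j ! (i - 1) \<in> set (?col j)"
      using that len[of j] by (intro nth_mem) (auto simp: mem_boxes_iff)
    then have "?col j ! (i - 1) \<in> set xs"
      using set_take_subset by fastforce
    then show ?thesis
      using assms(2) entry[OF that] by simp
  qed
  moreover have "key_of n lam xs j i < key_of n lam xs j (Suc i)"
    if "(j, i) \<in> boxes n lam" "(j, Suc i) \<in> boxes n lam" for j i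
    using that len[of j] strict_sorted_list_of_set entry
    by (auto simp: mem_boxes_iff sorted_wrt_nth_less)
  moreover have "key_of n lam xs j i \<le> key_of n lam xs (Suc j) i"
    if "(j, i) \<in> boxes n lam" "(Suc j, i) \<in> boxes n lam" for j i
    unfolding entry[OF that(1)] entry[OF that(2)]
  proof (rule sorted_list_of_set_nth_le_of_subset)
    show "set (take (col_len n lam (Suc j)) xs) \<subseteq> set (take (col_len n lam j) xs)"
      by (rule set_take_subset_set_take) (simp add: col_len_antimono)
    show "i - 1 < card (set (take (col_len n lam (Suc j)) xs))"
      using that card_set_take_col_len[OF assms] by (auto simp: mem_boxes_iff)
  qed simp
  ultimately show ?thesis
    unfolding tableau_def by (simp add: key_of_def)
qed

lemma key_of_is_key:
  assumes "distinct xs" "set xs = {1..n}"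
  shows "is_key n lam (key_of n lam xs)"
  unfolding is_key_def
proof (intro conjI key_of_tableau[OF assms] allI impI)
  fix l j assume "1 \<le> l \<and> l \<le> j \<and> j \<le> lam 1"
  then show "col_set n lam (key_of n lam xs) j \<subseteq> col_set n lam (key_of n lam xs) l"
    using col_set_key_of[OF assms, of j] col_set_key_of[OF assms, of l]
      set_take_subset_set_take[OF col_len_antimono[of l j]] by simp
qed

lemma tableau_eq_key_of:
  assumes "tableau n lam Y" "distinct xs" "set xs = {1..n}"
    and "\<And>j. 1 \<le> j \<Longrightarrow> j \<le> lam 1 \<Longrightarrow> col_set n lam Y j = set (take (col_len n lam j) xs)"
  shows "Y = key_of n lam xs"
proof (intro ext)
  fix j i
  show "Y j i = key_of n lam xs j i"
  proof (cases "(j, i) \<in> boxes n lam")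
    case True
    then show ?thesis
      using tableau_eq_nth_col_set[OF assms(1) True] assms(4) by (simp add: key_of_def mem_boxes_iff)
  next
    case False
    then show ?thesis
      using assms(1) by (simp add: tableau_def key_of_def)
  qed
qed

section \<open>Strict partitions\<close>

context
  fixes n :: nat and lam :: "nat \<Rightarrow> nat"
  assumes strict: "strict_partition n lam"
begin

lemma strict_partition_diff_le:
  assumes "1 \<le> i" "i \<le> i'" "i' \<le> n"
  shows "lam i' + (i' - i) \<le> lam i"
  using assms(2,3)
proof (induction i' rule: dec_induct)
  case (step m)
  then have "lam (Suc m) < lam m"
    using strict assms(1) by (simp add: strict_partition_def)
  then show ?case
    using step by simp
qed simp

lemma col_len_Suc_lam_Suc:
  assumes "q < n"
  shows "col_len n lam (Suc (lam (Suc q))) = q"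
proof -
  have "{i. 1 \<le> i \<and> i \<le> n \<and> Suc (lam (Suc q)) \<le> lam i} = {1..q}"
  proof (intro equalityI subsetI)
    fix i assume i: "i \<in> {i. 1 \<le> i \<and> i \<le> n \<and> Suc (lam (Suc q)) \<le> lam i}"
    show "i \<in> {1..q}"
    proof (rule ccontr)
      assume "i \<notin> {1..q}"
      then show False
        using i strict_partition_diff_le[of "Suc q" i] by auto
    qed
  next
    fix i assume "i \<in> {1..q}"
    then show "i \<in> {i. 1 \<le> i \<and> i \<le> n \<and> Suc (lam (Suc q)) \<le> lam i}"
      using strict_partition_diff_le[of i "Suc q"] assms by auto
  qed
  then show ?thesis
    by (simp add: col_len_def)
qed

lemma Suc_lam_Suc_le_lam_1: "1 \<le> q \<Longrightarrow> q < n \<Longrightarrow> Suc (lam (Suc q)) \<le> lam 1"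
  using strict_partition_diff_le[of 1 "Suc q"] by auto

lemma short_lengths_eq: "1 \<le> n \<Longrightarrow> short_lengths n lam = {1..n - 1}"
proof (intro equalityI subsetI)
  fix q assume "1 \<le> n" "q \<in> short_lengths n lam"
  then show "q \<in> {1..n - 1}"
    using col_len_pos by (force simp: short_lengths_def)
next
  fix q assume "q \<in> {1..n - 1}"
  then have "col_len n lam (Suc (lam (Suc q))) = q" "1 \<le> Suc (lam (Suc q))" "Suc (lam (Suc q)) \<le> lam 1" "q < n"
    using col_len_Suc_lam_Suc Suc_lam_Suc_le_lam_1 by auto
  then show "q \<in> short_lengths n lam"
    unfolding short_lengths_def by (intro CollectI exI[of _ "Suc (lam (Suc q))"]) simp
qed

end

text \<open>For a strict partition column Suc (lam (Suc q)) has length q (col_len_Suc_lam_Suc), so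
  key_chain n lam Y q is the common entry set of the columns of length q of a key Y.\<close>

definition key_chain :: "nat \<Rightarrow> (nat \<Rightarrow> nat) \<Rightarrow> (nat \<Rightarrow> nat \<Rightarrow> nat) \<Rightarrow> nat \<Rightarrow> nat set" where
  "key_chain n lam Y q = (if q < n then col_set n lam Y (Suc (lam (Suc q))) else {1..n})"

definition gapless_step :: "nat \<Rightarrow> (nat \<Rightarrow> nat) \<Rightarrow> (nat \<Rightarrow> nat \<Rightarrow> nat) \<Rightarrow> nat \<Rightarrow> nat \<Rightarrow> bool" where
  "gapless_step n lam Y q q' \<longleftrightarrow>
     (let b = Min (vals_of_len n lam Y q' - vals_of_len n lam Y q);
          m = Max (vals_of_len n lam Y q)
      in b \<le> m \<longrightarrow> (\<forall>j \<in> cols_of_len n lam q'. {b..m} \<subseteq> col_set n lam Y j))"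

context
  fixes n :: nat and lam :: "nat \<Rightarrow> nat"
  assumes strict: "strict_partition n lam" and n_pos: "1 \<le> n"
begin

lemma card_key_chain:
  assumes "tableau n lam Y" "q \<le> n"
  shows "finite (key_chain n lam Y q) \<and> card (key_chain n lam Y q) = q"
proof (cases "1 \<le> q \<and> q < n")
  case True
  then show ?thesis
    using card_col_set[OF assms(1), of "Suc (lam (Suc q))"] col_len_Suc_lam_Suc[OF strict]
      Suc_lam_Suc_le_lam_1[OF strict] finite_col_set
    by (simp add: key_chain_def)
next
  case False
  then have "q = 0 \<or> q = n"
    using assms(2) by auto
  then show ?thesis
    using col_len_Suc_lam_Suc[OF strict, of 0] n_pos by (auto simp: key_chain_def col_set_def)
qed

lemma key_chain_mono:
  assumes "is_key n lam Y" "q < n"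
  shows "key_chain n lam Y q \<subseteq> key_chain n lam Y (Suc q)"
proof (cases "q = 0")
  case True
  then show ?thesis
    using col_len_Suc_lam_Suc[OF strict, of 0] n_pos by (simp add: key_chain_def col_set_def)
next
  case False
  have "Suc (lam (Suc q)) \<le> lam 1"
    using Suc_lam_Suc_le_lam_1[OF strict] False assms(2) by simp
  moreover have "lam (Suc (Suc q)) \<le> lam (Suc q)" if "Suc q < n"
    using strict_partition_diff_le[OF strict, of "Suc q" "Suc (Suc q)"] that by simp
  ultimately show ?thesis
    using assms col_set_subset[of n lam Y "Suc (lam (Suc q))"]
    by (auto simp: key_chain_def is_key_def)
qed

lemma col_set_eq_key_chain:
  assumes "is_key n lam Y" "1 \<le> j" "j \<le> lam 1"
  shows "col_set n lam Y j = key_chain n lam Y (col_len n lam j)"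
proof (cases "col_len n lam j < n")
  case True
  then show ?thesis
    using key_col_set_eq_if_col_len_eq[OF assms] col_len_Suc_lam_Suc[OF strict True]
      Suc_lam_Suc_le_lam_1[OF strict] col_len_pos[where j = j and lam = lam, OF n_pos assms(3)]
    by (simp add: key_chain_def)
next
  case False
  have "tableau n lam Y"
    using assms(1) by (simp add: is_key_def)
  then have "col_set n lam Y j = {1..n}"
    using card_col_set[OF \<open>tableau n lam Y\<close> assms(2,3)] col_len_le[of n lam j] False
    by (intro card_subset_eq[OF finite_atLeastAtMost col_set_subset[OF \<open>tableau n lam Y\<close> assms(2,3)]]) auto
  then show ?thesis
    using False by (simp add: key_chain_def)
qed

lemma key_eq_key_of:
  assumes "is_key n lam Y"
  obtains xs where "distinct xs" "set xs = {1..n}" "Y = key_of n lam xs"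
proof -
  have "tableau n lam Y"
    using assms by (simp add: is_key_def)
  obtain xs where xs: "length xs = n" "distinct xs" "\<forall>q \<le> n. set (take q xs) = key_chain n lam Y q"
    using exists_list_set_take_eq[of n "key_chain n lam Y"] key_chain_mono[OF assms]
      card_key_chain[OF \<open>tableau n lam Y\<close>] by blast
  then have "set xs = {1..n}"
    using xs(3)[rule_format, of n] by (simp add: key_chain_def)
  moreover have "col_set n lam Y j = set (take (col_len n lam j) xs)" if "1 \<le> j" "j \<le> lam 1" for j
    using col_set_eq_key_chain[OF assms that] xs(3) col_len_le[of n lam j] by simp
  ultimately show ?thesis
    using that tableau_eq_key_of[OF \<open>tableau n lam Y\<close> xs(2)] xs(2) by blast
qed

lemma key_of_inject:
  assumes "distinct xs" "set xs = {1..n}" "distinct ys" "set ys = {1..n}"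
    and "key_of n lam xs = key_of n lam ys"
  shows "xs = ys"
proof (rule list_eq_if_set_take_eq)
  have "length xs = n" "length ys = n"
    using assms length_eq_if_set_eq_atLeastAtMost by metis+
  then show "length xs = length ys"
    by simp
  fix q
  show "set (take q xs) = set (take q ys)"
  proof (cases "1 \<le> q \<and> q < n")
    case True
    define j where "j = Suc (lam (Suc q))"
    have "col_len n lam j = q" "1 \<le> j" "j \<le> lam 1"
      using col_len_Suc_lam_Suc[OF strict] Suc_lam_Suc_le_lam_1[OF strict] True by (auto simp: j_def)
    then show ?thesis
      using col_set_key_of[OF assms(1,2)] col_set_key_of[OF assms(3,4)] assms(5) by metis
  next
    case False
    then have "q = 0 \<or> n \<le> q"
      by auto
    then show ?thesis
      using assms(2,4) \<open>length xs = n\<close> \<open>length ys = n\<close> by auto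
  qed
qed (use assms in simp_all)

lemma gapless_iff_gapless_step:
  "gapless n lam Y \<longleftrightarrow> (\<forall>k. 1 \<le> k \<and> Suc k < n \<longrightarrow> gapless_step n lam Y k (Suc k))"
proof -
  have "(q < q' \<and> \<not> (\<exists>x \<in> {1..n - 1}. q < x \<and> x < q')) \<longleftrightarrow> q' = Suc q"
    if "q \<in> {1..n - 1}" "q' \<in> {1..n - 1}" for q q'
    using that by (auto simp: not_less_eq)
  then show ?thesis
    unfolding gapless_def gapless_step_def[symmetric] short_lengths_eq[OF strict n_pos]
    by (auto simp: Suc_le_eq)
qed

lemma vals_of_len_key_of:
  assumes "distinct xs" "set xs = {1..n}" "1 \<le> q" "q < n"
  shows "vals_of_len n lam (key_of n lam xs) q = set (take q xs)"
proof -
  have "Suc (lam (Suc q)) \<in> cols_of_len n lam q"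
    using assms(3,4) col_len_Suc_lam_Suc[OF strict] Suc_lam_Suc_le_lam_1[OF strict]
    by (simp add: cols_of_len_def)
  then show ?thesis
    using col_set_key_of[OF assms(1,2)] by (auto simp: vals_of_len_def cols_of_len_def)
qed

lemma gapless_step_key_of_iff:
  assumes "distinct xs" "set xs = {1..n}" "1 \<le> k" "Suc k < n"
  shows "gapless_step n lam (key_of n lam xs) k (Suc k) \<longleftrightarrow> admissible (set (take k xs)) (xs ! k)"
proof -
  let ?P = "set (take k xs)"
  have "k < length xs"
    using assms length_eq_if_set_eq_atLeastAtMost[OF assms(1,2)] by simp
  note step = set_take_Suc_nth[OF assms(1) this]
  have vals: "vals_of_len n lam (key_of n lam xs) k = ?P"
    "vals_of_len n lam (key_of n lam xs) (Suc k) = insert (xs ! k) ?P"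
    using vals_of_len_key_of[OF assms(1,2)] assms(3,4) step by simp_all
  have "insert (xs ! k) ?P - ?P = {xs ! k}"
    using step by blast
  moreover have "?P \<noteq> {}"
    using assms(3) \<open>k < length xs\<close> by auto
  moreover have "col_set n lam (key_of n lam xs) j = insert (xs ! k) ?P" if "j \<in> cols_of_len n lam (Suc k)" for j
    using that col_set_key_of[OF assms(1,2)] step by (simp add: cols_of_len_def)
  moreover have "Suc (lam (Suc (Suc k))) \<in> cols_of_len n lam (Suc k)"
    using assms(4) col_len_Suc_lam_Suc[OF strict] Suc_lam_Suc_le_lam_1[OF strict]
    by (simp add: cols_of_len_def)
  ultimately show ?thesis
    unfolding gapless_step_def vals Let_def admissible_def by auto
qed

lemma card_gapless_keys: "card {Y. is_key n lam Y \<and> gapless n lam Y} = ballot n 0"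
proof -
  have gapless_key_of: "gapless n lam (key_of n lam xs) \<longleftrightarrow> admissible_seq {} xs"
    if "distinct xs" "set xs = {1..n}" for xs
    using gapless_iff_gapless_step gapless_step_key_of_iff[OF that] admissible_seq_empty_iff[OF that]
    by simp
  have "bij_betw (key_of n lam) (completions n {}) {Y. is_key n lam Y \<and> gapless n lam Y}"
  proof (rule bij_betw_imageI)
    show "inj_on (key_of n lam) (completions n {})"
      using key_of_inject by (auto simp: inj_on_def completions_def)
    show "key_of n lam ` completions n {} = {Y. is_key n lam Y \<and> gapless n lam Y}"
    proof (intro equalityI subsetI)
      fix Y assume "Y \<in> key_of n lam ` completions n {}"
      then show "Y \<in> {Y. is_key n lam Y \<and> gapless n lam Y}"
        using key_of_is_key gapless_key_of by (auto simp: completions_def)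
    next
      fix Y assume "Y \<in> {Y. is_key n lam Y \<and> gapless n lam Y}"
      then obtain xs where "distinct xs" "set xs = {1..n}" "Y = key_of n lam xs" "gapless n lam Y"
        using key_eq_key_of by blast
      then show "Y \<in> key_of n lam ` completions n {}"
        using gapless_key_of by (auto simp: completions_def)
    qed
  qed
  then show ?thesis
    using bij_betw_same_card card_completions_empty[OF n_pos] by metis
qed

end

theorem corollary5p3:
  fixes n :: nat and lam :: "nat \<Rightarrow> nat"
  assumes "1 \<le> n" and "strict_partition n lam"
  shows "real (card {Y. is_key n lam Y \<and> gapless n lam Y})
           = real ((2 * n) choose n) / real (n + 1)"
proof -
  have "real (n + 1) * real (card {Y. is_key n lam Y \<and> gapless n lam Y}) = real ((2 * n) choose n)"
    using card_gapless_keys[OF assms(2,1)] Suc_times_ballot_eq_binomial[of n]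
    by (metis Suc_eq_plus1 of_nat_mult)
  then show ?thesis
    by (simp add: field_simps)
qed

end
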